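(* Let $(E,\tau)$ be a locally solid vector lattice and let $x\in E$. Let $I_x$ and $B_x$ denote the ideal and the band in $E$ generated by $x$. Then the restricted topology $\tau|_{B_x}$ is solidly submetrisable if and only if the restricted topology $\tau|_{I_x}$ is solidly submetrisable.
   Context: All vector lattices are real and Archimedean; linear topologies are Hausdorff. A locally solid topology on a vector lattice is a linear topology such that zero has a neighbourhood basis of solid sets. A locally solid topology $\sigma$ on a vector lattice $G$ is called solidly submetrisable if it is finer than some metrisable locally solid topology on $G$. (Here $I_x$ and $B_x$ are regarded as vector lattices with the restricted topologies.) *)

theory Defs
  imports "HOL-Analysis.Analysis"
begin

text \<open>All notions below are relative to a carrier set S
(a vector sublattice / ideal of the ambient vector lattice), so that the
restricted topologies on I_x and B_x can be handled.\<close>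

definition vabs :: "'a::{ordered_real_vector,lattice} \<Rightarrow> 'a" where
  "vabs x = sup x (- x)"

definition archimedean_vl :: "'a::{ordered_real_vector,lattice} itself \<Rightarrow> bool" where
  "archimedean_vl _ \<longleftrightarrow>
     (\<forall>x y :: 'a. 0 \<le> x \<and> (\<forall>n::nat. real n *\<^sub>R x \<le> y) \<longrightarrow> x = 0)"

definition is_ideal :: "'a::{ordered_real_vector,lattice} set \<Rightarrow> bool" where
  "is_ideal I \<longleftrightarrow> 0 \<in> I \<and> (\<forall>x\<in>I. \<forall>y\<in>I. x + y \<in> I) \<and> (\<forall>c. \<forall>x\<in>I. c *\<^sub>R x \<in> I)
     \<and> (\<forall>x\<in>I. \<forall>y. vabs y \<le> vabs x \<longrightarrow> y \<in> I)"

definition is_lub :: "'a::order set \<Rightarrow> 'a \<Rightarrow> bool" where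
  "is_lub D s \<longleftrightarrow> (\<forall>d\<in>D. d \<le> s) \<and> (\<forall>u. (\<forall>d\<in>D. d \<le> u) \<longrightarrow> s \<le> u)"

definition is_band :: "'a::{ordered_real_vector,lattice} set \<Rightarrow> bool" where
  "is_band B \<longleftrightarrow> is_ideal B \<and> (\<forall>D s. D \<subseteq> B \<and> is_lub D s \<longrightarrow> s \<in> B)"

definition ideal_gen :: "'a::{ordered_real_vector,lattice} \<Rightarrow> 'a set" where
  "ideal_gen x = \<Inter>{I. is_ideal I \<and> x \<in> I}"

definition band_gen :: "'a::{ordered_real_vector,lattice} \<Rightarrow> 'a set" where
  "band_gen x = \<Inter>{B. is_band B \<and> x \<in> B}"

definition solid_in :: "'a::{ordered_real_vector,lattice} set \<Rightarrow> 'a set \<Rightarrow> bool" where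
  "solid_in S A \<longleftrightarrow> A \<subseteq> S \<and> (\<forall>x\<in>A. \<forall>y\<in>S. vabs y \<le> vabs x \<longrightarrow> y \<in> A)"

definition linear_topology_on :: "'a::{ordered_real_vector,lattice} set \<Rightarrow> 'a topology \<Rightarrow> bool" where
  "linear_topology_on S T \<longleftrightarrow> topspace T = S \<and> Hausdorff_space T
     \<and> continuous_map (prod_topology T T) T (\<lambda>(a, b). a + b)
     \<and> continuous_map (prod_topology euclideanreal T) T (\<lambda>(c, a). c *\<^sub>R a)"

definition locally_solid_on :: "'a::{ordered_real_vector,lattice} set \<Rightarrow> 'a topology \<Rightarrow> bool" where
  "locally_solid_on S T \<longleftrightarrow> linear_topology_on S T \<and>
     (\<forall>U. openin T U \<and> 0 \<in> U \<longrightarrow>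
        (\<exists>V. solid_in S V \<and> V \<subseteq> U \<and> (\<exists>W. openin T W \<and> 0 \<in> W \<and> W \<subseteq> V)))"

definition solidly_submetrisable :: "'a::{ordered_real_vector,lattice} set \<Rightarrow> 'a topology \<Rightarrow> bool" where
  "solidly_submetrisable S \<sigma> \<longleftrightarrow>
     (\<exists>\<rho>. locally_solid_on S \<rho> \<and> metrizable_space \<rho> \<and> (\<forall>U. openin \<rho> U \<longrightarrow> openin \<sigma> U))"

end

(*
  Let rho be a metrisable locally solid topology on I_x that is coarser than tau. Choose solid
  rho-neighbourhoods W_k of zero with W_(k+1) + W_(k+1) + W_(k+1) \<subseteq> W_k and whose
  intersection is {0}. Their preimages V_k = {y \<in> B_x. inf |y| |x| \<in> W_k} under the
  truncation y \<mapsto> inf |y| |x| are solid in B_x, satisfy the same triple-sum condition, and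
  still intersect in {0} because no nonzero element of B_x is disjoint from x. As in the
  Birkhoff-Kakutani metrisation theorem, such a chain defines an F-norm on B_x whose topology is
  linear and locally solid, and it is coarser than tau because every V_k contains the trace of a
  solid tau-neighbourhood of zero. The converse direction is restriction to the ideal I_x.
*)

theory Submission
  imports Defs "HOL-Library.Lattice_Algebras"
begin

section \<open>Arithmetic in vector lattices\<close>

text \<open>The sort \<open>{ordered_real_vector, lattice}\<close> is not a subclass of the lattice-ordered groups of
  the library, so their theory is imported by interpretation, with \<open>vabs\<close> as absolute value.\<close>

interpretation vl: lattice_ab_group_add_abs vabs "(+)" "0::'a::{ordered_real_vector,lattice}"
  "(-)" uminus "(\<le>)" "(<)" inf sup
  by unfold_locales (simp add: vabs_def)

lemma scaleR_sup_nonneg: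
  fixes a b :: "'a::{ordered_real_vector,lattice}"
  assumes "0 \<le> t"
  shows "t *\<^sub>R sup a b = sup (t *\<^sub>R a) (t *\<^sub>R b)"
proof (cases "t = 0")
  case False
  with assms have "0 < t" by simp
  show ?thesis
  proof (rule antisym)
    have "a \<le> sup (t *\<^sub>R a) (t *\<^sub>R b) /\<^sub>R t" "b \<le> sup (t *\<^sub>R a) (t *\<^sub>R b) /\<^sub>R t"
      using \<open>0 < t\<close> by (simp_all add: pos_le_divideR_eq)
    then show "t *\<^sub>R sup a b \<le> sup (t *\<^sub>R a) (t *\<^sub>R b)"
      using \<open>0 < t\<close> by (simp flip: pos_le_divideR_eq)
  qed (intro sup_least scaleR_left_mono; simp add: assms)
qed simp

lemma scaleR_inf_nonneg:
  fixes a b :: "'a::{ordered_real_vector,lattice}"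
  assumes "0 \<le> t"
  shows "t *\<^sub>R inf a b = inf (t *\<^sub>R a) (t *\<^sub>R b)"
proof -
  have "t *\<^sub>R inf a b = - (t *\<^sub>R sup (- a) (- b))"
    by (simp only: vl.inf_eq_neg_sup[of a b] scaleR_minus_right)
  also have "\<dots> = inf (t *\<^sub>R a) (t *\<^sub>R b)"
    by (simp only: scaleR_sup_nonneg[OF assms] scaleR_minus_right vl.neg_sup_eq_inf minus_minus)
  finally show ?thesis .
qed

lemma vabs_scaleR: "vabs (c *\<^sub>R (y::'a::{ordered_real_vector,lattice})) = \<bar>c\<bar> *\<^sub>R vabs y"
proof -
  have "vabs (c *\<^sub>R y) = vabs (\<bar>c\<bar> *\<^sub>R y)"
  proof (cases "0 \<le> c")
    case False
    then have "\<bar>c\<bar> *\<^sub>R y = - (c *\<^sub>R y)" by simp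
    then show ?thesis by simp
  qed simp
  also have "\<dots> = \<bar>c\<bar> *\<^sub>R vabs y"
    by (simp add: vabs_def scaleR_sup_nonneg)
  finally show ?thesis .
qed

lemma inf_add_le_add_inf:
  fixes a b c :: "'a::{ordered_real_vector,lattice}"
  assumes "0 \<le> a" "0 \<le> b" "0 \<le> c"
  shows "inf (a + b) c \<le> inf a c + inf b c"
proof -
  have "inf a c + inf b c = inf (inf (a + b) (c + b)) (inf (a + c) (c + c))"
    by (simp add: vl.add_inf_distrib_left vl.add_inf_distrib_right)
  moreover have "c \<le> c + b" "c \<le> a + c" "c \<le> c + c"
    using assms by simp_all
  ultimately show ?thesis
    by (simp add: le_infI2)
qed

lemma inf_vabs_add_le:
  fixes a b u :: "'a::{ordered_real_vector,lattice}"
  assumes "0 \<le> u"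
  shows "inf (vabs (a + b)) u \<le> inf (vabs a) u + inf (vabs b) u"
proof -
  have "inf (vabs (a + b)) u \<le> inf (vabs a + vabs b) u"
    by (intro inf_mono vl.abs_triangle_ineq order_refl)
  also have "\<dots> \<le> inf (vabs a) u + inf (vabs b) u"
    using assms by (intro inf_add_le_add_inf) simp_all
  finally show ?thesis .
qed

lemma inf_scaleR_eq_0:
  fixes a v :: "'a::{ordered_real_vector,lattice}"
  assumes "0 \<le> a" "0 \<le> v" "0 \<le> t" "inf a v = 0"
  shows "inf (t *\<^sub>R a) v = 0"
proof (rule antisym)
  let ?T = "max t 1"
  have "inf (t *\<^sub>R a) v \<le> inf (?T *\<^sub>R a) (?T *\<^sub>R v)"
  proof (rule inf_mono)
    show "t *\<^sub>R a \<le> ?T *\<^sub>R a"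
      using assms by (intro scaleR_right_mono) auto
    show "v \<le> ?T *\<^sub>R v"
      using assms scaleR_right_mono[of 1 ?T v] by simp
  qed
  also have "\<dots> = 0"
    using assms by (simp flip: scaleR_inf_nonneg)
  finally show "inf (t *\<^sub>R a) v \<le> 0" .
qed (use assms in \<open>simp add: scaleR_nonneg_nonneg\<close>)

lemma is_lub_inf_nonpos:
  fixes s c :: "'a::{ordered_real_vector,lattice}"
  assumes "is_lub D s" "\<And>d. d \<in> D \<Longrightarrow> inf d c \<le> 0"
  shows "inf s c \<le> 0"
proof -
  have "d \<le> sup s c - c" if "d \<in> D" for d
  proof -
    have "d \<le> s"
      using assms(1) that by (simp add: is_lub_def)
    then have "sup d c + inf d c \<le> sup s c + 0"
      using assms(2)[OF that] by (intro add_mono) (simp_all add: le_supI1)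
    then show ?thesis
      by (simp only: vl.add_eq_inf_sup[of d c, symmetric] le_diff_eq add_0_right)
  qed
  then have "s \<le> sup s c - c"
    using assms(1) unfolding is_lub_def by blast
  then have "sup s c + inf s c \<le> sup s c + 0"
    by (simp only: vl.add_eq_inf_sup[of s c, symmetric] le_diff_eq add_0_right)
  then show ?thesis
    by (rule add_le_imp_le_left)
qed

section \<open>Ideals and bands\<close>

context
  fixes I :: "'a::{ordered_real_vector,lattice} set"
  assumes I: "is_ideal I"
begin

lemma ideal_zero: "0 \<in> I"
  using I by (simp add: is_ideal_def)

lemma ideal_add: "a \<in> I \<Longrightarrow> b \<in> I \<Longrightarrow> a + b \<in> I"
  using I by (simp add: is_ideal_def)

lemma ideal_scaleR: "a \<in> I \<Longrightarrow> c *\<^sub>R a \<in> I"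
  using I by (simp add: is_ideal_def)

lemma ideal_solid: "a \<in> I \<Longrightarrow> vabs y \<le> vabs a \<Longrightarrow> y \<in> I"
  using I by (simp add: is_ideal_def)

lemma ideal_inf_vabs: "x \<in> I \<Longrightarrow> inf (vabs y) (vabs x) \<in> I"
  by (erule ideal_solid) simp

end

lemma is_ideal_Inter: "(\<And>I. I \<in> F \<Longrightarrow> is_ideal I) \<Longrightarrow> is_ideal (\<Inter>F)"
  unfolding is_ideal_def by blast

lemma is_ideal_ideal_gen: "is_ideal (ideal_gen x)"
  unfolding ideal_gen_def by (rule is_ideal_Inter) blast

lemma mem_ideal_gen: "x \<in> ideal_gen x"
  unfolding ideal_gen_def by blast

lemma is_ideal_band_gen: "is_ideal (band_gen x)"
  unfolding band_gen_def by (rule is_ideal_Inter) (simp add: is_band_def)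

lemma ideal_gen_subset_band_gen: "ideal_gen x \<subseteq> band_gen x"
  unfolding ideal_gen_def band_gen_def is_band_def by blast

definition disjoint_compl :: "'a::{ordered_real_vector,lattice} set \<Rightarrow> 'a set" where
  "disjoint_compl A = {z. \<forall>w\<in>A. inf (vabs z) (vabs w) = 0}"

lemma is_ideal_disjoint_compl: "is_ideal (disjoint_compl A)"
  unfolding is_ideal_def
proof (intro conjI ballI allI impI)
  show "0 \<in> disjoint_compl A"
    by (simp add: disjoint_compl_def inf_absorb1)
next
  fix a b assume a: "a \<in> disjoint_compl A" and b: "b \<in> disjoint_compl A"
  show "a + b \<in> disjoint_compl A"
    unfolding disjoint_compl_def
  proof (intro CollectI ballI antisym)
    fix w assume "w \<in> A"
    have "inf (vabs (a + b)) (vabs w) \<le> inf (vabs a) (vabs w) + inf (vabs b) (vabs w)"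
      by (simp add: inf_vabs_add_le)
    also have "\<dots> = 0"
      using a b \<open>w \<in> A\<close> by (simp add: disjoint_compl_def)
    finally show "inf (vabs (a + b)) (vabs w) \<le> 0" .
  qed simp
next
  fix c a assume "a \<in> disjoint_compl A"
  then show "c *\<^sub>R a \<in> disjoint_compl A"
    by (simp add: disjoint_compl_def vabs_scaleR inf_scaleR_eq_0)
next
  fix a y assume a: "a \<in> disjoint_compl A" and "vabs y \<le> vabs a"
  show "y \<in> disjoint_compl A"
    unfolding disjoint_compl_def
  proof (intro CollectI ballI antisym)
    fix w assume "w \<in> A"
    have "inf (vabs y) (vabs w) \<le> inf (vabs a) (vabs w)"
      using \<open>vabs y \<le> vabs a\<close> by (intro inf_mono order_refl)
    also have "\<dots> = 0"
      using a \<open>w \<in> A\<close> by (simp add: disjoint_compl_def)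
    finally show "inf (vabs y) (vabs w) \<le> 0" .
  qed simp
qed

lemma inf_vabs_le_add_parts:
  fixes s c :: "'a::{ordered_real_vector,lattice}"
  assumes "0 \<le> c"
  shows "inf (vabs s) c \<le> inf (sup s 0) c + inf (sup (- s) 0) c"
proof -
  have "vabs s \<le> sup s 0 + sup (- s) 0"
    by (simp add: vabs_def add_increasing add_increasing2)
  then have "inf (vabs s) c \<le> inf (sup s 0 + sup (- s) 0) c"
    by (rule inf_mono) simp
  also have "\<dots> \<le> inf (sup s 0) c + inf (sup (- s) 0) c"
    using assms by (intro inf_add_le_add_inf) simp_all
  finally show ?thesis .
qed

lemma is_lub_disjoint:
  fixes s c :: "'a::{ordered_real_vector,lattice}"
  assumes s: "is_lub D s" and "0 \<le> c" and disj: "\<And>d. d \<in> D \<Longrightarrow> inf (vabs d) c = 0"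
  shows "inf (vabs s) c = 0"
proof (cases "D = {}")
  case True
  with s have "s \<le> 0" "s \<le> s + s"
    unfolding is_lub_def by blast+
  then have "s = 0"
    by (metis antisym le_add_same_cancel1)
  with \<open>0 \<le> c\<close> show ?thesis
    by (simp add: inf_absorb1)
next
  case False
  then obtain d0 where "d0 \<in> D"
    by blast
  have "is_lub (insert 0 D) (sup s 0)"
    using s by (auto simp: is_lub_def le_supI1)
  moreover have "inf d c \<le> 0" if "d \<in> insert 0 D" for d
  proof (cases "d = 0")
    case False
    with that show ?thesis
      using disj[of d] inf_mono[OF vl.abs_ge_self order_refl, of d c] by simp
  qed simp
  ultimately have pos: "inf (sup s 0) c \<le> 0"
    by (rule is_lub_inf_nonpos)
  have "d0 \<le> s"
    using s \<open>d0 \<in> D\<close> by (simp add: is_lub_def)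
  then have "- s \<le> - d0"
    by simp
  then have "- s \<le> vabs d0"
    using vl.abs_ge_minus_self by (rule order_trans)
  then have "sup (- s) 0 \<le> vabs d0"
    by simp
  then have neg: "inf (sup (- s) 0) c \<le> 0"
    using disj[OF \<open>d0 \<in> D\<close>] by (metis inf_mono order_refl)
  have "inf (vabs s) c \<le> 0"
    using inf_vabs_le_add_parts[OF \<open>0 \<le> c\<close>, of s] add_nonpos_nonpos[OF pos neg] by (rule order_trans)
  with \<open>0 \<le> c\<close> show ?thesis
    by (simp add: antisym)
qed

lemma is_band_disjoint_compl: "is_band (disjoint_compl A)"
  unfolding is_band_def
proof (intro conjI is_ideal_disjoint_compl allI impI, elim conjE)
  fix D s assume D: "D \<subseteq> disjoint_compl A" and s: "is_lub D s"
  have "inf (vabs s) (vabs w) = 0" if "w \<in> A" for w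
    using s by (rule is_lub_disjoint) (use D that in \<open>auto simp: disjoint_compl_def\<close>)
  then show "s \<in> disjoint_compl A"
    by (simp add: disjoint_compl_def)
qed

definition weak_unit_in :: "'a::{ordered_real_vector,lattice} set \<Rightarrow> 'a \<Rightarrow> bool" where
  "weak_unit_in B x \<longleftrightarrow> (\<forall>y\<in>B. inf (vabs y) (vabs x) = 0 \<longrightarrow> y = 0)"

lemma weak_unit_in_band_gen: "weak_unit_in (band_gen x) x"
  unfolding weak_unit_in_def
proof (intro ballI impI)
  fix y assume "y \<in> band_gen x" "inf (vabs y) (vabs x) = 0"
  have "x \<in> disjoint_compl (disjoint_compl {x})"
    by (simp add: disjoint_compl_def inf_commute)
  then have "band_gen x \<subseteq> disjoint_compl (disjoint_compl {x})"
    unfolding band_gen_def using is_band_disjoint_compl by blast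
  moreover have "y \<in> disjoint_compl {x}"
    using \<open>inf (vabs y) (vabs x) = 0\<close> by (simp add: disjoint_compl_def)
  ultimately have "inf (vabs y) (vabs y) = 0"
    using \<open>y \<in> band_gen x\<close> unfolding disjoint_compl_def by blast
  then show "y = 0"
    by simp
qed

section \<open>Linear and locally solid topologies\<close>

lemma linear_topology_openin_translation:
  fixes \<tau> :: "'a::{ordered_real_vector,lattice} topology"
  assumes "linear_topology_on UNIV \<tau>" "openin \<tau> U"
  shows "openin \<tau> ((+) y ` U)"
proof -
  have top: "topspace \<tau> = UNIV"
    and add: "continuous_map (prod_topology \<tau> \<tau>) \<tau> (\<lambda>(a, b). a + b)"
    using assms(1) by (simp_all add: linear_topology_on_def)
  have "continuous_map \<tau> (prod_topology \<tau> \<tau>) (\<lambda>z. (z, - y))"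
    by (simp add: continuous_map_paired top flip: id_def)
  from continuous_map_compose[OF this add] have "continuous_map \<tau> \<tau> (\<lambda>z. z - y)"
    by (simp add: o_def)
  then have "openin \<tau> {z \<in> topspace \<tau>. z - y \<in> U}"
    using assms(2) by (rule openin_continuous_map_preimage)
  moreover have "{z \<in> topspace \<tau>. z - y \<in> U} = (+) y ` U"
    by (force simp: top)
  ultimately show ?thesis
    by simp
qed

lemma linear_topology_scaleR_small:
  fixes T :: "'a::{ordered_real_vector,lattice} topology"
  assumes "linear_topology_on S T" "y \<in> S" "openin T U" "0 \<in> U"
  obtains \<delta> where "\<delta> > 0" "\<And>t. \<bar>t\<bar> < \<delta> \<Longrightarrow> t *\<^sub>R y \<in> U"
proof -
  let ?P = "{p \<in> topspace (prod_topology euclideanreal T). (\<lambda>(c, a). c *\<^sub>R a) p \<in> U}"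
  have "openin (prod_topology euclideanreal T) ?P"
    using assms(1,3) by (intro openin_continuous_map_preimage) (simp_all add: linear_topology_on_def)
  moreover have "(0, y) \<in> ?P"
    using assms(1,2,4) by (simp add: linear_topology_on_def)
  ultimately obtain R N where "openin euclideanreal R" "0 \<in> R" "R \<times> N \<subseteq> ?P" "y \<in> N"
    unfolding openin_prod_topology_alt by blast
  then have "open R"
    by simp
  with \<open>0 \<in> R\<close> obtain \<delta> where "\<delta> > 0" "ball 0 \<delta> \<subseteq> R"
    using open_contains_ball by blast
  with \<open>R \<times> N \<subseteq> ?P\<close> \<open>y \<in> N\<close> show ?thesis
    by (intro that[of \<delta>]) (auto simp: subset_iff)
qed

lemma linear_topology_add_small:
  fixes T :: "'a::{ordered_real_vector,lattice} topology"
  assumes "linear_topology_on S T" "openin T U" "0 \<in> U"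
  obtains G where "openin T G" "0 \<in> G" "\<And>a b. a \<in> G \<Longrightarrow> b \<in> G \<Longrightarrow> a + b \<in> U"
proof -
  define P where "P = {p \<in> topspace (prod_topology T T). (\<lambda>(a, b). a + b) p \<in> U}"
  have "openin (prod_topology T T) P"
    unfolding P_def using assms(1,2)
    by (intro openin_continuous_map_preimage) (simp_all add: linear_topology_on_def)
  moreover have "0 \<in> topspace T"
    using assms(2,3) openin_subset by blast
  then have "(0, 0) \<in> P"
    using assms(3) by (simp add: P_def)
  ultimately obtain G1 G2 where "openin T G1" "openin T G2" "0 \<in> G1" "0 \<in> G2" "G1 \<times> G2 \<subseteq> P"
    using openin_prod_topology_alt[THEN iffD1, rule_format] by metis
  then show ?thesis
    by (intro that[of "G1 \<inter> G2"]) (auto simp: P_def)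
qed

lemma linear_topology_add3_small:
  fixes T :: "'a::{ordered_real_vector,lattice} topology"
  assumes "linear_topology_on S T" "openin T U" "0 \<in> U"
  obtains G where "openin T G" "0 \<in> G" "\<And>a b c. a \<in> G \<Longrightarrow> b \<in> G \<Longrightarrow> c \<in> G \<Longrightarrow> a + b + c \<in> U"
proof -
  obtain G1 where G1: "openin T G1" "0 \<in> G1" "\<And>a b. a \<in> G1 \<Longrightarrow> b \<in> G1 \<Longrightarrow> a + b \<in> U"
    using linear_topology_add_small[OF assms] by blast
  obtain G2 where G2: "openin T G2" "0 \<in> G2" "\<And>a b. a \<in> G2 \<Longrightarrow> b \<in> G2 \<Longrightarrow> a + b \<in> G1"
    using linear_topology_add_small[OF assms(1) G1(1,2)] by blast
  have "c \<in> G1" if "c \<in> G2" for c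
    using G2(3)[OF that G2(2)] by simp
  with G1(3) G2 show ?thesis
    by (intro that[of G2]) simp_all
qed

lemma linear_topology_on_subtopology:
  fixes T :: "'a::{ordered_real_vector,lattice} topology"
  assumes "linear_topology_on S T" "J \<subseteq> S" "is_ideal J"
  shows "linear_topology_on J (subtopology T J)"
proof -
  have "continuous_map (subtopology (prod_topology T T) (J \<times> J)) (subtopology T J) (\<lambda>(a, b). a + b)"
    using assms by (intro continuous_map_into_subtopology continuous_map_from_subtopology)
      (auto simp: linear_topology_on_def intro: ideal_add)
  moreover have "continuous_map (subtopology (prod_topology euclideanreal T) (UNIV \<times> J)) (subtopology T J)
      (\<lambda>(c, a). c *\<^sub>R a)"
    using assms by (intro continuous_map_into_subtopology continuous_map_from_subtopology)
      (auto simp: linear_topology_on_def intro: ideal_scaleR)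
  ultimately show ?thesis
    using assms(1,2) by (auto simp: linear_topology_on_def subtopology_Times Hausdorff_space_subtopology)
qed

lemma locally_solid_on_subtopology:
  fixes T :: "'a::{ordered_real_vector,lattice} topology"
  assumes T: "locally_solid_on S T" and "J \<subseteq> S" "is_ideal J"
  shows "locally_solid_on J (subtopology T J)"
  unfolding locally_solid_on_def
proof (intro conjI allI impI)
  show "linear_topology_on J (subtopology T J)"
    using T \<open>J \<subseteq> S\<close> \<open>is_ideal J\<close> linear_topology_on_subtopology
    unfolding locally_solid_on_def by blast
  fix U assume "openin (subtopology T J) U \<and> 0 \<in> U"
  then obtain G where "openin T G" "0 \<in> G" "U = G \<inter> J"
    by (auto simp: openin_subtopology)
  then obtain V W where "solid_in S V" "V \<subseteq> G" "openin T W" "0 \<in> W" "W \<subseteq> V"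
    using T unfolding locally_solid_on_def by blast
  moreover have "solid_in J (V \<inter> J)"
    using \<open>solid_in S V\<close> \<open>J \<subseteq> S\<close> by (auto simp: solid_in_def)
  ultimately show "\<exists>V. solid_in J V \<and> V \<subseteq> U \<and> (\<exists>W. openin (subtopology T J) W \<and> 0 \<in> W \<and> W \<subseteq> V)"
    using \<open>U = G \<inter> J\<close> ideal_zero[OF \<open>is_ideal J\<close>]
    by (intro exI[of _ "V \<inter> J"] conjI exI[of _ "W \<inter> J"]) (auto simp: openin_subtopology_Int)
qed

lemma solidly_submetrisable_subideal:
  fixes \<tau> :: "'a::{ordered_real_vector,lattice} topology"
  assumes "is_ideal J" "J \<subseteq> K" "solidly_submetrisable K (subtopology \<tau> K)"
  shows "solidly_submetrisable J (subtopology \<tau> J)"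
proof -
  obtain \<rho> where \<rho>: "locally_solid_on K \<rho>" "metrizable_space \<rho>"
    "\<And>U. openin \<rho> U \<Longrightarrow> openin (subtopology \<tau> K) U"
    using assms(3) unfolding solidly_submetrisable_def by blast
  have "openin (subtopology \<tau> J) U" if U: "openin (subtopology \<rho> J) U" for U
  proof -
    obtain G where "openin \<rho> G" "U = G \<inter> J"
      using U by (auto simp: openin_subtopology)
    then have "openin (subtopology (subtopology \<tau> K) J) U"
      using \<rho>(3) by (simp add: openin_subtopology_Int)
    then show ?thesis
      using assms(2) by (simp add: subtopology_subtopology Int_absorb1)
  qed
  then show ?thesis
    unfolding solidly_submetrisable_def using assms \<rho>
    by (metis locally_solid_on_subtopology metrizable_space_subtopology)
qed

lemma locally_solid_add3_small:
  fixes \<rho> :: "'a::{ordered_real_vector,lattice} topology"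
  assumes "locally_solid_on S \<rho>" "openin \<rho> U" "0 \<in> U"
  obtains V where "solid_in S V" "\<exists>Q. openin \<rho> Q \<and> 0 \<in> Q \<and> Q \<subseteq> V"
    "\<And>a b c. a \<in> V \<Longrightarrow> b \<in> V \<Longrightarrow> c \<in> V \<Longrightarrow> a + b + c \<in> U"
proof -
  obtain G where G: "openin \<rho> G" "0 \<in> G" "\<And>a b c. a \<in> G \<Longrightarrow> b \<in> G \<Longrightarrow> c \<in> G \<Longrightarrow> a + b + c \<in> U"
    using assms linear_topology_add3_small unfolding locally_solid_on_def by metis
  then obtain V where V: "solid_in S V" "V \<subseteq> G" "\<exists>Q. openin \<rho> Q \<and> 0 \<in> Q \<and> Q \<subseteq> V"
    using assms(1) unfolding locally_solid_on_def by blast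
  show ?thesis
  proof (rule that[OF V(1,3)])
    show "a + b + c \<in> U" if "a \<in> V" "b \<in> V" "c \<in> V" for a b c
      using G(3) V(2) that by blast
  qed

qed

lemma (in Metric_space) eq_if_mdist_less_inverse_Suc:
  assumes "x \<in> M" "y \<in> M" "\<And>n. d x y < inverse (Suc n)"
  shows "x = y"
proof -
  have "\<not> 0 < d x y"
    using reals_Archimedean assms(3) by (meson order.asym)
  then show ?thesis
    using assms(1,2) nonneg[of x y] by simp
qed

lemma metrizable_locally_solid_chain:
  fixes \<rho> :: "'a::{ordered_real_vector,lattice} topology"
  assumes \<rho>: "locally_solid_on S \<rho>" "metrizable_space \<rho>" and "0 \<in> S"
  obtains W where "W 0 = S" "\<And>k. solid_in S (W k)" "\<And>k. \<exists>Q. openin \<rho> Q \<and> 0 \<in> Q \<and> Q \<subseteq> W k"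
    "\<And>k a b c. a \<in> W (Suc k) \<Longrightarrow> b \<in> W (Suc k) \<Longrightarrow> c \<in> W (Suc k) \<Longrightarrow> a + b + c \<in> W k"
    "\<And>y. (\<And>k. y \<in> W k) \<Longrightarrow> y = 0"
proof -
  have "topspace \<rho> = S"
    using \<rho>(1) by (simp add: locally_solid_on_def linear_topology_on_def)
  with \<rho>(2) obtain m where "Metric_space S m" and \<rho>_eq: "\<rho> = Metric_space.mtopology S m"
    unfolding metrizable_space_def by (metis Metric_space.topspace_mtopology)
  interpret Metric_space S m
    by fact
  define P where "P k A \<longleftrightarrow> solid_in S A \<and> (\<exists>Q. openin \<rho> Q \<and> 0 \<in> Q \<and> Q \<subseteq> A) \<and> (k = 0 \<longrightarrow> A = S)"
    for k :: nat and A
  define R where "R k A V \<longleftrightarrow> (\<forall>a\<in>V. \<forall>b\<in>V. \<forall>c\<in>V. a + b + c \<in> A \<inter> mball 0 (inverse (Suc k)))"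
    for k A V
  have "P 0 S"
    using \<open>0 \<in> S\<close> openin_topspace[of \<rho>] \<open>topspace \<rho> = S\<close> by (auto simp: P_def solid_in_def)
  moreover have "\<exists>V. P (Suc k) V \<and> R k A V" if "P k A" for k A
  proof -
    obtain Q where "openin \<rho> Q" "0 \<in> Q" "Q \<subseteq> A"
      using \<open>P k A\<close> by (auto simp: P_def)
    then have "openin \<rho> (Q \<inter> mball 0 (inverse (Suc k)))" "0 \<in> Q \<inter> mball 0 (inverse (Suc k))"
      using \<open>0 \<in> S\<close> by (auto simp: \<rho>_eq)
    then obtain V where "solid_in S V" "\<exists>Q. openin \<rho> Q \<and> 0 \<in> Q \<and> Q \<subseteq> V"
      "\<And>a b c. a \<in> V \<Longrightarrow> b \<in> V \<Longrightarrow> c \<in> V \<Longrightarrow> a + b + c \<in> Q \<inter> mball 0 (inverse (Suc k))"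
      using locally_solid_add3_small[OF \<rho>(1)] by blast
    with \<open>Q \<subseteq> A\<close> show ?thesis
      unfolding P_def R_def by blast
  qed
  ultimately obtain W where W: "\<And>k. P k (W k)" "\<And>k. R k (W k) (W (Suc k))"
    using dependent_nat_choice[of P R] by blast
  have W_zero: "0 \<in> W k" for k
    using W(1)[of k] by (auto simp: P_def)
  show ?thesis
  proof (rule that)
    show "W 0 = S" "solid_in S (W k)" "\<exists>Q. openin \<rho> Q \<and> 0 \<in> Q \<and> Q \<subseteq> W k" for k
      using W(1) by (simp_all add: P_def)
    show "a + b + c \<in> W k" if "a \<in> W (Suc k)" "b \<in> W (Suc k)" "c \<in> W (Suc k)" for k a b c
      using W(2) that by (simp add: R_def)
  next
    fix y assume "\<And>k. y \<in> W k"
    then have "y + 0 + 0 \<in> mball 0 (inverse (Suc k))" for k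
      using W(2)[of k] W_zero[of "Suc k"] unfolding R_def by blast
    then show "y = 0"
      by (intro eq_if_mdist_less_inverse_Suc[symmetric]) (simp_all add: commute)
  qed
qed

section \<open>An F-norm from a balanced chain of sets\<close>

lemma le_double_if_dyadic_bounds:
  fixes g a :: real
  assumes "g \<le> 1" "0 \<le> a" "\<And>k. a < (1/2) ^ k \<Longrightarrow> g \<le> (1/2) ^ k"
  shows "g \<le> 2 * a"
proof (rule ccontr)
  assume "\<not> g \<le> 2 * a"
  have "g \<le> (1/2) ^ k" for k
  proof (induction k)
    case (Suc k)
    with \<open>\<not> g \<le> 2 * a\<close> have "a < (1/2) ^ Suc k"
      by simp
    then show ?case
      by (rule assms(3))
  qed (use assms(1) in simp)
  moreover obtain k where "(1/2::real) ^ k < g"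
    using real_arch_pow_inv[of g "1/2"] \<open>\<not> g \<le> 2 * a\<close> assms(2) by auto
  ultimately show False
    by (meson not_le)
qed

lemma sum_list_split_at:
  fixes f :: "'b \<Rightarrow> real"
  assumes "ys \<noteq> []" "\<And>y. y \<in> set ys \<Longrightarrow> 0 \<le> f y" "0 \<le> t"
  shows "\<exists>L m R. ys = L @ m # R \<and> sum_list (map f L) \<le> t \<and>
    (R = [] \<or> sum_list (map f R) \<le> sum_list (map f ys) - t)"
  using assms
proof (induction ys arbitrary: t rule: list_nonempty_induct)
  case (single y)
  then show ?case
    by (intro exI[of _ "[]"]) simp
next
  case (cons y ys)
  show ?case
  proof (cases "t < f y")
    case True
    with cons.prems show ?thesis
      by (intro exI[of _ "[]"] exI[of _ y] exI[of _ ys]) simp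
  next
    case False
    then obtain L m R where "ys = L @ m # R" "sum_list (map f L) \<le> t - f y"
      "R = [] \<or> sum_list (map f R) \<le> sum_list (map f ys) - (t - f y)"
      using cons.IH[of "t - f y"] cons.prems by auto
    then show ?thesis
      by (intro exI[of _ "y # L"] exI[of _ m] exI[of _ R]) auto
  qed
qed

lemma sum_list_split_halves:
  fixes f :: "'b \<Rightarrow> real"
  assumes "ys \<noteq> []" "\<And>y. y \<in> set ys \<Longrightarrow> 0 \<le> f y"
  obtains L m R where "ys = L @ m # R" "sum_list (map f L) \<le> sum_list (map f ys) / 2"
    "sum_list (map f R) \<le> sum_list (map f ys) / 2"
proof -
  have "0 \<le> sum_list (map f ys)"
    using assms(2) by (intro sum_list_nonneg) auto
  then have "0 \<le> sum_list (map f ys) / 2"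
    by simp
  from sum_list_split_at[of ys f, OF assms this] obtain L m R where LR: "ys = L @ m # R"
    "sum_list (map f L) \<le> sum_list (map f ys) / 2"
    and R: "R = [] \<or> sum_list (map f R) \<le> sum_list (map f ys) - sum_list (map f ys) / 2"
    by blast
  have "sum_list (map f R) \<le> sum_list (map f ys) / 2"
    using R \<open>0 \<le> sum_list (map f ys) / 2\<close> by auto
  with LR show ?thesis
    by (rule that)
qed

locale balanced_chain =
  fixes S :: "'a::real_vector set" and V :: "nat \<Rightarrow> 'a set"
  assumes chain_0 [simp]: "V 0 = S"
    and zero_in_chain: "0 \<in> V k"
    and chain_balanced: "y \<in> V k \<Longrightarrow> \<bar>t\<bar> \<le> 1 \<Longrightarrow> t *\<^sub>R y \<in> V k"
    and chain_add3: "a \<in> V (Suc k) \<Longrightarrow> b \<in> V (Suc k) \<Longrightarrow> c \<in> V (Suc k) \<Longrightarrow> a + b + c \<in> V k"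
    and chain_Inter: "(\<And>k. y \<in> V k) \<Longrightarrow> y = 0"
    and add_closed: "a \<in> S \<Longrightarrow> b \<in> S \<Longrightarrow> a + b \<in> S"
    and scaleR_closed: "a \<in> S \<Longrightarrow> t *\<^sub>R a \<in> S"
begin

lemma chain_Suc_subset: "V (Suc k) \<subseteq> V k"
  using chain_add3[of _ k 0 0] zero_in_chain by auto

lemma chain_antimono: "j \<le> k \<Longrightarrow> V k \<subseteq> V j"
  using chain_Suc_subset by (rule lift_Suc_antimono_le)

lemma chain_subset: "V k \<subseteq> S"
  using chain_antimono[of 0 k] by simp

lemma zero_closed: "0 \<in> S"
  using zero_in_chain[of 0] by simp

lemma diff_closed: "a \<in> S \<Longrightarrow> b \<in> S \<Longrightarrow> a - b \<in> S"
  using add_closed[of a "(- 1) *\<^sub>R b"] scaleR_closed[of b "- 1"] by simp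

lemma sum_list_closed: "set ys \<subseteq> S \<Longrightarrow> sum_list ys \<in> S"
  by (induction ys) (simp_all add: zero_closed add_closed)

text \<open>\<open>gauge y\<close> is \<open>(1/2)^k\<close> for the largest \<open>k\<close> with \<open>y \<in> V k\<close>, and \<open>0\<close> if \<open>y\<close> lies in every
  \<open>V k\<close>; outside \<open>S\<close> it is a junk value.\<close>

definition gauge :: "'a \<Rightarrow> real" where
  "gauge y = (INF k \<in> {k. y \<in> V k}. (1/2) ^ k)"

lemma bdd_below_gauge: "bdd_below ((\<lambda>k. (1/2::real) ^ k) ` A)"
  by (rule bdd_belowI2[of _ 0]) simp

lemma gauge_le: "y \<in> V k \<Longrightarrow> gauge y \<le> (1/2) ^ k"
  unfolding gauge_def by (rule cINF_lower[OF bdd_below_gauge]) simp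

lemma gauge_le_one: "y \<in> S \<Longrightarrow> gauge y \<le> 1"
  using gauge_le[of y 0] by simp

lemma gauge_nonneg: "y \<in> S \<Longrightarrow> 0 \<le> gauge y"
  unfolding gauge_def by (rule cINF_greatest) (auto intro: exI[of _ 0])

lemma chain_mem_if_gauge_less:
  assumes "y \<in> S" "gauge y < (1/2) ^ k"
  shows "y \<in> V (Suc k)"
proof -
  obtain j where "y \<in> V j" "(1/2::real) ^ j < (1/2) ^ k"
    using assms cINF_less_iff[OF _ bdd_below_gauge] unfolding gauge_def
    by (metis (mono_tags, lifting) chain_0 empty_iff mem_Collect_eq)
  then have "Suc k \<le> j"
    by (simp add: Suc_le_eq)
  then show ?thesis
    using \<open>y \<in> V j\<close> chain_antimono by blast
qed

lemma gauge_scaleR_le: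
  assumes "y \<in> S" "\<bar>t\<bar> \<le> 1"
  shows "gauge (t *\<^sub>R y) \<le> gauge y"
  unfolding gauge_def
proof (rule cINF_superset_mono[OF _ bdd_below_gauge])
  show "{k. y \<in> V k} \<noteq> {}"
    using assms(1) by (auto intro: exI[of _ 0])
  show "{k. y \<in> V k} \<subseteq> {k. t *\<^sub>R y \<in> V k}"
    using assms(2) chain_balanced by blast
qed simp

lemma gauge_add3:
  assumes "a \<in> S" "b \<in> S" "c \<in> S"
  shows "gauge (a + b + c) \<le> 2 * max (gauge a) (max (gauge b) (gauge c))"
proof (rule le_double_if_dyadic_bounds)
  show "gauge (a + b + c) \<le> 1"
    using assms by (intro gauge_le_one add_closed)
  show "0 \<le> max (gauge a) (max (gauge b) (gauge c))"
    using gauge_nonneg[OF assms(1)] by simp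
  fix k assume "max (gauge a) (max (gauge b) (gauge c)) < (1/2) ^ k"
  then have "a + b + c \<in> V k"
    using assms by (intro chain_add3 chain_mem_if_gauge_less) simp_all
  then show "gauge (a + b + c) \<le> (1/2) ^ k"
    by (rule gauge_le)
qed

lemma gauge_zero: "gauge 0 = 0"
  using le_double_if_dyadic_bounds[of "gauge 0" 0] gauge_le[OF zero_in_chain]
    gauge_nonneg[OF zero_closed] gauge_le_one[OF zero_closed] by simp

lemma gauge_le_0_imp_zero:
  assumes "y \<in> S" "gauge y \<le> 0"
  shows "y = 0"
proof (rule chain_Inter)
  fix k
  have "gauge y < (1/2) ^ k"
    using assms(2) by (simp add: le_less_trans)
  with assms(1) have "y \<in> V (Suc k)"
    by (rule chain_mem_if_gauge_less)
  then show "y \<in> V k"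
    using chain_Suc_subset by blast
qed

lemma sum_list_gauge_nonneg: "set ys \<subseteq> S \<Longrightarrow> 0 \<le> sum_list (map gauge ys)"
  by (induction ys) (simp_all add: gauge_nonneg)

text \<open>Splitting the list where its gauge-sum crosses the half makes both ends small,
  so that \<open>gauge_add3\<close> can be applied inductively.\<close>

lemma gauge_sum_list_le: "set ys \<subseteq> S \<Longrightarrow> gauge (sum_list ys) \<le> 2 * sum_list (map gauge ys)"
proof (induction "length ys" arbitrary: ys rule: less_induct)
  case less
  show ?case
  proof (cases "ys = []")
    case False
    let ?a = "sum_list (map gauge ys)"
    have "0 \<le> gauge y" if "y \<in> set ys" for y
      using less.prems that gauge_nonneg by blast
    then obtain L m R where split: "ys = L @ m # R" "sum_list (map gauge L) \<le> ?a / 2"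
      "sum_list (map gauge R) \<le> ?a / 2"
      using sum_list_split_halves[OF False] by blast
    have sets: "set L \<subseteq> S" "m \<in> S" "set R \<subseteq> S"
      using less.prems split(1) by auto
    have "length L < length ys" "length R < length ys"
      using split(1) by simp_all
    then have "gauge (sum_list L) \<le> ?a" "gauge (sum_list R) \<le> ?a"
      using less.hyps[OF _ sets(1)] less.hyps[OF _ sets(3)] split(2,3) by fastforce+
    moreover have "gauge m \<le> ?a"
      using split(1) sum_list_gauge_nonneg[OF sets(1)] sum_list_gauge_nonneg[OF sets(3)] by simp
    ultimately have "gauge (sum_list L + m + sum_list R) \<le> 2 * ?a"
      using gauge_add3[of "sum_list L" m "sum_list R"] sets by (simp add: sum_list_closed)
    then show ?thesis
      using split(1) by (simp add: add.assoc)
  qed (simp add: gauge_zero)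
qed

text \<open>The largest subadditive minorant of \<open>gauge\<close>; by \<open>gauge_sum_list_le\<close> it is at least
  half of \<open>gauge\<close>.\<close>

definition fnorm :: "'a \<Rightarrow> real" where
  "fnorm y = Inf {sum_list (map gauge ys) | ys. set ys \<subseteq> S \<and> sum_list ys = y}"

lemma fnorm_le_sum_list: "set ys \<subseteq> S \<Longrightarrow> fnorm (sum_list ys) \<le> sum_list (map gauge ys)"
  unfolding fnorm_def
  by (rule cInf_lower) (auto intro!: bdd_belowI[of _ 0] sum_list_gauge_nonneg)

lemma le_fnorm:
  assumes "y \<in> S" "\<And>ys. set ys \<subseteq> S \<Longrightarrow> sum_list ys = y \<Longrightarrow> c \<le> sum_list (map gauge ys)"
  shows "c \<le> fnorm y"
  unfolding fnorm_def by (rule cInf_greatest) (use assms in \<open>auto intro!: exI[of _ "[y]"]\<close>)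

lemma fnorm_nonneg: "y \<in> S \<Longrightarrow> 0 \<le> fnorm y"
  by (rule le_fnorm) (simp_all add: sum_list_gauge_nonneg)

lemma fnorm_le_gauge: "y \<in> S \<Longrightarrow> fnorm y \<le> gauge y"
  using fnorm_le_sum_list[of "[y]"] by simp

lemma gauge_le_fnorm: "y \<in> S \<Longrightarrow> gauge y \<le> 2 * fnorm y"
  using le_fnorm[of y "gauge y / 2"] gauge_sum_list_le by fastforce

lemma fnorm_zero: "fnorm 0 = 0"
  using fnorm_le_gauge[OF zero_closed] fnorm_nonneg[OF zero_closed] by (simp add: gauge_zero)

lemma fnorm_add:
  assumes "y \<in> S" "z \<in> S"
  shows "fnorm (y + z) \<le> fnorm y + fnorm z"
proof -
  have "fnorm (y + z) - sum_list (map gauge zs) \<le> fnorm y" if "set zs \<subseteq> S" "sum_list zs = z" for zs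
  proof (rule le_fnorm[OF assms(1)])
    fix ys assume "set ys \<subseteq> S" "sum_list ys = y"
    with that show "fnorm (y + z) - sum_list (map gauge zs) \<le> sum_list (map gauge ys)"
      using fnorm_le_sum_list[of "ys @ zs"] by simp
  qed
  then have "fnorm (y + z) - fnorm y \<le> fnorm z"
    by (intro le_fnorm[OF assms(2)]) (simp add: algebra_simps)
  then show ?thesis
    by simp
qed

lemma fnorm_scaleR_le:
  assumes "y \<in> S" "\<bar>t\<bar> \<le> 1"
  shows "fnorm (t *\<^sub>R y) \<le> fnorm y"
proof (rule le_fnorm[OF assms(1)])
  fix ys assume ys: "set ys \<subseteq> S" "sum_list ys = y"
  have "sum_list (map (scaleR t) ys) = t *\<^sub>R y"
    unfolding ys(2)[symmetric] by (induction ys) (simp_all add: scaleR_right_distrib)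
  then have "fnorm (t *\<^sub>R y) \<le> sum_list (map gauge (map (scaleR t) ys))"
    using fnorm_le_sum_list[of "map (scaleR t) ys"] ys(1) scaleR_closed by auto
  also have "\<dots> \<le> sum_list (map gauge ys)"
    unfolding map_map comp_def using ys(1) assms(2)
    by (intro sum_list_mono gauge_scaleR_le) auto
  finally show "fnorm (t *\<^sub>R y) \<le> sum_list (map gauge ys)" .
qed

lemma fnorm_minus: "y \<in> S \<Longrightarrow> fnorm (- y) = fnorm y"
  using fnorm_scaleR_le[of y "- 1"] fnorm_scaleR_le[of "- y" "- 1"] scaleR_closed[of y "- 1"]
  by simp

lemma fnorm_scaleR_of_nat: "y \<in> S \<Longrightarrow> fnorm (real n *\<^sub>R y) \<le> real n * fnorm y"
proof (induction n)
  case (Suc n)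
  have "real (Suc n) *\<^sub>R y = real n *\<^sub>R y + y"
    by (simp add: scaleR_left_distrib)
  then have "fnorm (real (Suc n) *\<^sub>R y) \<le> fnorm (real n *\<^sub>R y) + fnorm y"
    using fnorm_add[OF scaleR_closed[OF Suc.prems] Suc.prems] by simp
  with Suc show ?case
    by (simp add: distrib_right)
qed (simp add: fnorm_zero)

lemma fnorm_scaleR:
  assumes "y \<in> S" "\<bar>c\<bar> \<le> real n"
  shows "fnorm (c *\<^sub>R y) \<le> real n * fnorm y"
proof (cases "n = 0")
  case False
  then have "fnorm (c *\<^sub>R y) = fnorm (real n *\<^sub>R ((c / real n) *\<^sub>R y))"
    by simp
  also have "\<dots> \<le> real n * fnorm ((c / real n) *\<^sub>R y)"
    using assms(1) by (intro fnorm_scaleR_of_nat scaleR_closed)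
  also have "\<dots> \<le> real n * fnorm y"
    using assms False by (intro mult_left_mono fnorm_scaleR_le) (simp_all add: field_simps)
  finally show ?thesis .
qed (use assms in \<open>simp add: fnorm_zero\<close>)

definition chain_dist :: "'a \<Rightarrow> 'a \<Rightarrow> real" where
  "chain_dist y z = (if y \<in> S \<and> z \<in> S then fnorm (y - z) else 0)"

sublocale Metric_space S chain_dist
proof
  fix y z
  show "0 \<le> chain_dist y z"
    by (simp add: chain_dist_def fnorm_nonneg diff_closed)
  show "chain_dist y z = chain_dist z y"
    using fnorm_minus[of "z - y"] by (auto simp: chain_dist_def diff_closed)
next
  fix y z assume "y \<in> S" "z \<in> S"
  then show "chain_dist y z = 0 \<longleftrightarrow> y = z"
    using gauge_le_fnorm[of "y - z"] gauge_le_0_imp_zero[of "y - z"] fnorm_nonneg[of "y - z"]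
    by (auto simp: chain_dist_def fnorm_zero diff_closed)
next
  fix x y z assume "x \<in> S" "y \<in> S" "z \<in> S"
  then show "chain_dist x z \<le> chain_dist x y + chain_dist y z"
    using fnorm_add[of "x - y" "y - z"] by (simp add: chain_dist_def diff_closed)
qed

lemma chain_dist_le: "y \<in> S \<Longrightarrow> z \<in> S \<Longrightarrow> z - y \<in> V k \<Longrightarrow> chain_dist y z \<le> (1/2) ^ k"
  using fnorm_minus[of "z - y"] fnorm_le_gauge[of "z - y"] gauge_le[of "z - y" k]
  by (simp add: chain_dist_def diff_closed)

lemma chain_subset_mball: "(1/2) ^ k < r \<Longrightarrow> V k \<subseteq> mball 0 r"
  using chain_dist_le[of 0 _ k] chain_subset zero_closed by fastforce

lemma mball_subset_chain: "mball 0 ((1/2) ^ Suc k) \<subseteq> V k"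
proof
  fix z assume "z \<in> mball 0 ((1/2) ^ Suc k)"
  then have "z \<in> S" "chain_dist 0 z < (1/2) ^ Suc k"
    by simp_all
  then have "fnorm z < (1/2) ^ Suc k"
    using fnorm_minus[of z] by (simp add: chain_dist_def zero_closed)
  then have "gauge z < (1/2) ^ k"
    using gauge_le_fnorm[OF \<open>z \<in> S\<close>] by simp
  then show "z \<in> V k"
    using chain_mem_if_gauge_less[OF \<open>z \<in> S\<close>] chain_Suc_subset by blast
qed

lemma continuous_map_add_mtopology: "continuous_map (prod_topology mtopology mtopology) mtopology (\<lambda>(a, b). a + b)"
  unfolding continuous_map_to_metric
proof (intro ballI allI impI)
  fix p :: "'a \<times> 'a" and \<epsilon> :: real
  assume "p \<in> topspace (prod_topology mtopology mtopology)" "0 < \<epsilon>"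
  then obtain a b where p: "p = (a, b)" "a \<in> S" "b \<in> S"
    by auto
  show "\<exists>U. openin (prod_topology mtopology mtopology) U \<and> p \<in> U \<and>
      (\<forall>q\<in>U. (\<lambda>(a, b). a + b) q \<in> mball ((\<lambda>(a, b). a + b) p) \<epsilon>)"
  proof (intro exI conjI ballI)
    show "openin (prod_topology mtopology mtopology) (mball a (\<epsilon>/2) \<times> mball b (\<epsilon>/2))"
      by (simp add: openin_prod_Times_iff)
    show "p \<in> mball a (\<epsilon>/2) \<times> mball b (\<epsilon>/2)"
      using p \<open>0 < \<epsilon>\<close> by simp
    fix q assume "q \<in> mball a (\<epsilon>/2) \<times> mball b (\<epsilon>/2)"
    then obtain a' b' where q: "q = (a', b')" "a' \<in> S" "b' \<in> S"
      "fnorm (a - a') < \<epsilon>/2" "fnorm (b - b') < \<epsilon>/2"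
      using p by (auto simp: chain_dist_def)
    have "fnorm ((a + b) - (a' + b')) \<le> fnorm (a - a') + fnorm (b - b')"
      using fnorm_add[of "a - a'" "b - b'"] p q by (simp add: diff_closed algebra_simps)
    then show "(\<lambda>(a, b). a + b) q \<in> mball ((\<lambda>(a, b). a + b) p) \<epsilon>"
      using p q by (simp add: chain_dist_def add_closed)
  qed
qed

lemma fnorm_scaleR_diff_le:
  assumes "y \<in> S" "y' \<in> S" "\<bar>c'\<bar> \<le> real n"
  shows "fnorm (c *\<^sub>R y - c' *\<^sub>R y') \<le> fnorm ((c - c') *\<^sub>R y) + real n * fnorm (y - y')"
proof -
  have "fnorm (c *\<^sub>R y - c' *\<^sub>R y') \<le> fnorm ((c - c') *\<^sub>R y) + fnorm (c' *\<^sub>R (y - y'))"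
    using fnorm_add[of "(c - c') *\<^sub>R y" "c' *\<^sub>R (y - y')"] assms(1,2)
    by (simp add: scaleR_closed diff_closed algebra_simps)
  also have "fnorm (c' *\<^sub>R (y - y')) \<le> real n * fnorm (y - y')"
    using assms by (intro fnorm_scaleR diff_closed)
  finally show ?thesis
    by simp
qed

lemma continuous_map_scaleR_mtopology:
  assumes absorbing: "\<And>y k. y \<in> S \<Longrightarrow> \<exists>\<delta>>0. \<forall>t. \<bar>t\<bar> < \<delta> \<longrightarrow> t *\<^sub>R y \<in> V k"
  shows "continuous_map (prod_topology euclideanreal mtopology) mtopology (\<lambda>(c, a). c *\<^sub>R a)"
  unfolding continuous_map_to_metric
proof (intro ballI allI impI)
  fix p :: "real \<times> 'a" and \<epsilon> :: real
  assume "p \<in> topspace (prod_topology euclideanreal mtopology)" "0 < \<epsilon>"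
  then obtain c y where p: "p = (c, y)" "y \<in> S"
    by auto
  obtain k where k: "(1/2::real) ^ k < \<epsilon>/2"
    using real_arch_pow_inv[of "\<epsilon>/2" "1/2"] \<open>0 < \<epsilon>\<close> by auto
  obtain \<delta> where "\<delta> > 0" and \<delta>: "\<And>t. \<bar>t\<bar> < \<delta> \<Longrightarrow> t *\<^sub>R y \<in> V k"
    using absorbing[OF p(2)] by blast
  define n where "n = nat \<lceil>\<bar>c\<bar>\<rceil> + 1"
  have "0 < real n" "\<bar>c\<bar> + 1 \<le> real n"
    unfolding n_def by linarith+
  let ?U = "ball c (min \<delta> 1) \<times> mball y (\<epsilon> / (2 * real n))"
  show "\<exists>U. openin (prod_topology euclideanreal mtopology) U \<and> p \<in> U \<and>
      (\<forall>q\<in>U. (\<lambda>(c, a). c *\<^sub>R a) q \<in> mball ((\<lambda>(c, a). c *\<^sub>R a) p) \<epsilon>)"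
  proof (intro exI[of _ ?U] conjI ballI)
    show "openin (prod_topology euclideanreal mtopology) ?U"
      by (simp add: openin_prod_Times_iff)
    show "p \<in> ?U"
      using p \<open>0 < \<epsilon>\<close> \<open>0 < real n\<close> \<open>\<delta> > 0\<close> by simp
    fix q assume "q \<in> ?U"
    then obtain c' y' where q: "q = (c', y')" "y' \<in> S" "\<bar>c - c'\<bar> < min \<delta> 1"
      "fnorm (y - y') < \<epsilon> / (2 * real n)"
      using p by (auto simp: chain_dist_def dist_real_def)
    have "fnorm ((c - c') *\<^sub>R y) \<le> (1/2) ^ k"
      using \<delta>[of "c - c'"] q(3) p(2) scaleR_closed fnorm_le_gauge gauge_le
      by (meson min_less_iff_conj order_trans)
    moreover have "real n * fnorm (y - y') < \<epsilon> / 2"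
      using q(4) \<open>0 < real n\<close> by (simp add: field_simps)
    moreover have "\<bar>c'\<bar> \<le> real n"
      using q(3) \<open>\<bar>c\<bar> + 1 \<le> real n\<close> by linarith
    then have "fnorm (c *\<^sub>R y - c' *\<^sub>R y') \<le> fnorm ((c - c') *\<^sub>R y) + real n * fnorm (y - y')"
      by (rule fnorm_scaleR_diff_le[OF p(2) q(2)])
    ultimately have "fnorm (c *\<^sub>R y - c' *\<^sub>R y') < \<epsilon>"
      using k by linarith
    then show "(\<lambda>(c, a). c *\<^sub>R a) q \<in> mball ((\<lambda>(c, a). c *\<^sub>R a) p) \<epsilon>"
      using p q by (simp add: chain_dist_def scaleR_closed)
  qed
qed

lemma openin_subtopology_if_openin_mtopology:
  assumes translation: "\<And>y U. openin \<tau> U \<Longrightarrow> openin \<tau> ((+) y ` U)"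
    and nhds: "\<And>k. \<exists>U. openin \<tau> U \<and> 0 \<in> U \<and> U \<inter> S \<subseteq> V k"
    and "openin mtopology U"
  shows "openin (subtopology \<tau> S) U"
proof (subst openin_subopen, intro ballI)
  fix y assume "y \<in> U"
  then obtain r where "r > 0" "mball y r \<subseteq> U"
    using \<open>openin mtopology U\<close> openin_mtopology by blast
  have "y \<in> S"
    using \<open>y \<in> U\<close> \<open>openin mtopology U\<close> openin_subset by fastforce
  obtain k where k: "(1/2::real) ^ k < r"
    using real_arch_pow_inv[of r "1/2"] \<open>r > 0\<close> by auto
  obtain N where N: "openin \<tau> N" "0 \<in> N" "N \<inter> S \<subseteq> V k"
    using nhds by blast
  show "\<exists>T. openin (subtopology \<tau> S) T \<and> y \<in> T \<and> T \<subseteq> U"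
  proof (intro exI conjI)
    show "openin (subtopology \<tau> S) ((+) y ` N \<inter> S)"
      using translation[OF N(1)] by (simp add: openin_subtopology_Int)
    show "y \<in> (+) y ` N \<inter> S"
      using N(2) \<open>y \<in> S\<close> by (auto intro: image_eqI[of _ _ 0])
    have "z \<in> mball y r" if "z \<in> (+) y ` N \<inter> S" for z
    proof -
      have "z \<in> S" "z - y \<in> N"
        using that by auto
      then have "z - y \<in> V k"
        using N(3) \<open>y \<in> S\<close> diff_closed by blast
      then show ?thesis
        using chain_dist_le[OF \<open>y \<in> S\<close> \<open>z \<in> S\<close>] k \<open>y \<in> S\<close> \<open>z \<in> S\<close> by fastforce
    qed
    then show "(+) y ` N \<inter> S \<subseteq> U"
      using \<open>mball y r \<subseteq> U\<close> by blast
  qed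
qed

end

section \<open>Solid submetrisability of bands\<close>

lemma solidly_submetrisable_if_solid_chain:
  fixes \<tau> :: "'a::{ordered_real_vector,lattice} topology"
  assumes \<tau>: "linear_topology_on UNIV \<tau>" and "balanced_chain S V"
    and solid: "\<And>k. solid_in S (V k)"
    and nhds: "\<And>k. \<exists>U. openin \<tau> U \<and> 0 \<in> U \<and> U \<inter> S \<subseteq> V k"
  shows "solidly_submetrisable S (subtopology \<tau> S)"
proof -
  interpret balanced_chain S V
    by fact
  have absorbing: "\<exists>\<delta>>0. \<forall>t. \<bar>t\<bar> < \<delta> \<longrightarrow> t *\<^sub>R y \<in> V k" if "y \<in> S" for y k
  proof -
    obtain U where U: "openin \<tau> U" "0 \<in> U" "U \<inter> S \<subseteq> V k"
      using nhds by blast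
    then obtain \<delta> where "\<delta> > 0" "\<And>t. \<bar>t\<bar> < \<delta> \<Longrightarrow> t *\<^sub>R y \<in> U"
      using linear_topology_scaleR_small[OF \<tau>, of y U] by blast
    then show ?thesis
      using U(3) scaleR_closed[OF that] by blast
  qed
  have "locally_solid_on S mtopology"
    unfolding locally_solid_on_def linear_topology_on_def
  proof (intro conjI allI impI)
    show "continuous_map (prod_topology euclideanreal mtopology) mtopology (\<lambda>(c, a). c *\<^sub>R a)"
      using absorbing by (rule continuous_map_scaleR_mtopology)
    fix U assume "openin mtopology U \<and> 0 \<in> U"
    then obtain r where "r > 0" "mball 0 r \<subseteq> U"
      using openin_mtopology by blast
    then obtain k where k: "(1/2::real) ^ k < r"
      using real_arch_pow_inv[of r "1/2"] by auto
    show "\<exists>V'. solid_in S V' \<and> V' \<subseteq> U \<and> (\<exists>W. openin mtopology W \<and> 0 \<in> W \<and> W \<subseteq> V')"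
    proof (intro exI conjI)
      show "V k \<subseteq> U"
        using chain_subset_mball[OF k] \<open>mball 0 r \<subseteq> U\<close> by blast
      show "openin mtopology (mball 0 ((1/2) ^ Suc k))" "0 \<in> mball 0 ((1/2) ^ Suc k)"
        using zero_closed by simp_all
    qed (rule solid, rule mball_subset_chain)
  qed (simp_all add: Hausdorff_space_mtopology continuous_map_add_mtopology)
  moreover have "openin (subtopology \<tau> S) U" if "openin mtopology U" for U
    using linear_topology_openin_translation[OF \<tau>] nhds that
    by (rule openin_subtopology_if_openin_mtopology)
  ultimately show ?thesis
    unfolding solidly_submetrisable_def using metrizable_space_mtopology by blast
qed

lemma solid_in_nonneg_le:
  assumes "solid_in S W" "w \<in> W" "z \<in> S" "0 \<le> z" "z \<le> w"
  shows "z \<in> W"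
proof -
  have "vabs z \<le> vabs w"
    using assms(4,5) vl.abs_ge_self[of w] by simp
  then show ?thesis
    using assms(1-3) unfolding solid_in_def by blast
qed

lemma solid_in_truncation:
  assumes "is_ideal I" "x \<in> I" "solid_in I W"
  shows "solid_in B {y \<in> B. inf (vabs y) (vabs x) \<in> W}"
  unfolding solid_in_def
proof (intro conjI ballI impI)
  fix y z assume y: "y \<in> {y \<in> B. inf (vabs y) (vabs x) \<in> W}" and "z \<in> B" "vabs z \<le> vabs y"
  then have le: "inf (vabs z) (vabs x) \<le> inf (vabs y) (vabs x)"
    by (intro inf_mono order_refl)
  from y have "inf (vabs y) (vabs x) \<in> W"
    by simp
  then have "inf (vabs z) (vabs x) \<in> W"
    by (rule solid_in_nonneg_le[OF assms(3) _ ideal_inf_vabs[OF assms(1,2)] _ le]) simp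
  with \<open>z \<in> B\<close> show "z \<in> {y \<in> B. inf (vabs y) (vabs x) \<in> W}"
    by simp
qed auto

lemma balanced_chain_truncation:
  fixes W :: "nat \<Rightarrow> 'a::{ordered_real_vector,lattice} set"
  assumes I: "is_ideal I" "x \<in> I" and B: "is_ideal B" "weak_unit_in B x"
    and W: "W 0 = I" "\<And>k. solid_in I (W k)" "\<And>k. 0 \<in> W k"
      "\<And>k a b c. a \<in> W (Suc k) \<Longrightarrow> b \<in> W (Suc k) \<Longrightarrow> c \<in> W (Suc k) \<Longrightarrow> a + b + c \<in> W k"
      "\<And>y. (\<And>k. y \<in> W k) \<Longrightarrow> y = 0"
  shows "balanced_chain B (\<lambda>k. {y \<in> B. inf (vabs y) (vabs x) \<in> W k})"
proof
  let ?u = "vabs x"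
  have trunc_I: "inf (vabs y) ?u \<in> I" for y
    using I by (rule ideal_inf_vabs)
  show "{y \<in> B. inf (vabs y) ?u \<in> W 0} = B"
    using trunc_I W(1) by blast
  show "0 \<in> {y \<in> B. inf (vabs y) ?u \<in> W k}" for k
    using W(3) ideal_zero[OF B(1)] by (simp add: inf_absorb1)
  show "t *\<^sub>R y \<in> {y \<in> B. inf (vabs y) ?u \<in> W k}"
    if "y \<in> {y \<in> B. inf (vabs y) ?u \<in> W k}" "\<bar>t\<bar> \<le> 1" for y k t
  proof -
    have "vabs (t *\<^sub>R y) \<le> vabs y"
      using that(2) scaleR_right_mono[of "\<bar>t\<bar>" 1 "vabs y"] by (simp add: vabs_scaleR)
    with that(1) show ?thesis
      using solid_in_truncation[OF I W(2)] ideal_scaleR[OF B(1)] unfolding solid_in_def by blast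
  qed
  show "a + b + c \<in> {y \<in> B. inf (vabs y) ?u \<in> W k}"
    if "a \<in> {y \<in> B. inf (vabs y) ?u \<in> W (Suc k)}" "b \<in> {y \<in> B. inf (vabs y) ?u \<in> W (Suc k)}"
      "c \<in> {y \<in> B. inf (vabs y) ?u \<in> W (Suc k)}" for a b c k
  proof -
    let ?s = "inf (vabs a) ?u + inf (vabs b) ?u + inf (vabs c) ?u"
    have le: "inf (vabs (a + b + c)) ?u \<le> ?s"
      using inf_vabs_add_le[of ?u "a + b" c] inf_vabs_add_le[of ?u a b]
      by (simp add: order_trans[OF _ add_right_mono])
    have "?s \<in> W k"
      using that by (intro W(4)) simp_all
    then have "inf (vabs (a + b + c)) ?u \<in> W k"
      by (rule solid_in_nonneg_le[OF W(2) _ trunc_I _ le]) simp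
    then show ?thesis
      using that ideal_add[OF B(1)] by simp
  qed
  show "y = 0" if "\<And>k. y \<in> {y \<in> B. inf (vabs y) ?u \<in> W k}" for y
    using W(5) that B(2) by (simp add: weak_unit_in_def)
  show "a + b \<in> B" if "a \<in> B" "b \<in> B" for a b
    using B(1) that by (rule ideal_add)
  show "t *\<^sub>R a \<in> B" if "a \<in> B" for a t
    using B(1) that by (rule ideal_scaleR)
qed

lemma locally_solid_truncation_nhd:
  fixes \<tau> :: "'a::{ordered_real_vector,lattice} topology"
  assumes \<tau>: "locally_solid_on UNIV \<tau>" and I: "is_ideal I" "x \<in> I"
    and Q: "openin (subtopology \<tau> I) Q" "0 \<in> Q"
  obtains U where "openin \<tau> U" "0 \<in> U" "U \<inter> B \<subseteq> {y \<in> B. inf (vabs y) (vabs x) \<in> Q}"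
proof -
  obtain G where "openin \<tau> G" "0 \<in> G" "Q = G \<inter> I"
    using Q by (auto simp: openin_subtopology)
  then obtain D U where D: "solid_in UNIV D" "D \<subseteq> G" and U: "openin \<tau> U" "0 \<in> U" "U \<subseteq> D"
    using \<tau> unfolding locally_solid_on_def by blast
  have "inf (vabs y) (vabs x) \<in> Q" if "y \<in> U" for y
  proof -
    have "vabs (inf (vabs y) (vabs x)) \<le> vabs y"
      by simp
    then have "inf (vabs y) (vabs x) \<in> D"
      using D(1) U(3) that unfolding solid_in_def by blast
    then show ?thesis
      using D(2) \<open>Q = G \<inter> I\<close> ideal_inf_vabs[OF I] by blast
  qed
  with U(1,2) show ?thesis
    by (intro that) auto
qed

lemma solidly_submetrisable_if_weak_unit:
  fixes \<tau> :: "'a::{ordered_real_vector,lattice} topology"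
  assumes \<tau>: "locally_solid_on UNIV \<tau>" and I: "is_ideal I" "x \<in> I"
    and B: "is_ideal B" "weak_unit_in B x"
    and "solidly_submetrisable I (subtopology \<tau> I)"
  shows "solidly_submetrisable B (subtopology \<tau> B)"
proof -
  obtain \<rho> where \<rho>: "locally_solid_on I \<rho>" "metrizable_space \<rho>"
    "\<And>U. openin \<rho> U \<Longrightarrow> openin (subtopology \<tau> I) U"
    using assms(6) unfolding solidly_submetrisable_def by blast
  obtain W where W: "W 0 = I" "\<And>k. solid_in I (W k)" "\<And>k. \<exists>Q. openin \<rho> Q \<and> 0 \<in> Q \<and> Q \<subseteq> W k"
    "\<And>k a b c. a \<in> W (Suc k) \<Longrightarrow> b \<in> W (Suc k) \<Longrightarrow> c \<in> W (Suc k) \<Longrightarrow> a + b + c \<in> W k"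
    "\<And>y. (\<And>k. y \<in> W k) \<Longrightarrow> y = 0"
    using metrizable_locally_solid_chain[OF \<rho>(1,2) ideal_zero[OF I(1)]] by blast
  define V where "V k = {y \<in> B. inf (vabs y) (vabs x) \<in> W k}" for k
  have W_zero: "0 \<in> W k" for k
    using W(3) by blast
  have "balanced_chain B V"
    unfolding V_def by (rule balanced_chain_truncation[where W = W, OF I B W(1,2) W_zero W(4,5)])
  moreover have "solid_in B (V k)" for k
    unfolding V_def using I W(2) by (rule solid_in_truncation)
  moreover have "\<exists>U. openin \<tau> U \<and> 0 \<in> U \<and> U \<inter> B \<subseteq> V k" for k
  proof -
    obtain Q where "openin \<rho> Q" "0 \<in> Q" "Q \<subseteq> W k"
      using W(3) by blast
    then obtain U where "openin \<tau> U" "0 \<in> U" "U \<inter> B \<subseteq> {y \<in> B. inf (vabs y) (vabs x) \<in> Q}"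
      using locally_solid_truncation_nhd[OF \<tau> I \<rho>(3)] by blast
    with \<open>Q \<subseteq> W k\<close> show ?thesis
      unfolding V_def by blast
  qed
  moreover have "linear_topology_on UNIV \<tau>"
    using \<tau> by (simp add: locally_solid_on_def)
  ultimately show ?thesis
    by (intro solidly_submetrisable_if_solid_chain[where V = V])
qed

theorem proposition3p6:
  fixes \<tau> :: "'a::{ordered_real_vector,lattice} topology" and x :: 'a
  assumes "archimedean_vl TYPE('a)"
    and "locally_solid_on UNIV \<tau>"
  shows "solidly_submetrisable (band_gen x) (subtopology \<tau> (band_gen x))
     \<longleftrightarrow> solidly_submetrisable (ideal_gen x) (subtopology \<tau> (ideal_gen x))"
proof
  assume "solidly_submetrisable (band_gen x) (subtopology \<tau> (band_gen x))"
  with is_ideal_ideal_gen ideal_gen_subset_band_gen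
  show "solidly_submetrisable (ideal_gen x) (subtopology \<tau> (ideal_gen x))"
    by (rule solidly_submetrisable_subideal)
next
  assume "solidly_submetrisable (ideal_gen x) (subtopology \<tau> (ideal_gen x))"
  with assms(2) is_ideal_ideal_gen mem_ideal_gen is_ideal_band_gen weak_unit_in_band_gen
  show "solidly_submetrisable (band_gen x) (subtopology \<tau> (band_gen x))"
    by (rule solidly_submetrisable_if_weak_unit)
qed

end
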